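(* Let $G$ be a linearly ordered abelian group, $F$ a field of characteristic $0$, $n\leq 3$, and let $\Gamma$ be an almost non-degenerate elementary $G$-grading on $M_n(F)$ whose neutral component is commutative. Then $\Gamma$ is equivalent to the canonical $\mathbb{Z}$-grading on $M_n(F)$.
   Context: A linearly ordered group is a group with a translation-invariant total order. The elementary grading on $M_n(F)$ induced by $(g_1,\dots,g_n)$ is $R_g=\mathrm{span}\{e_{pq}: g_q-g_p=g\}$; the canonical $\mathbb{Z}$-grading is the one induced by $(0,1,\dots,n-1)$. Two gradings are equivalent if there are an algebra isomorphism $\varphi$ and a bijection $\alpha$ between their supports with $\varphi(A_g)=B_{\alpha(g)}$ for all $g$ in the support. A graded monomial identity is trivial if it lies in the $T_G$-ideal generated by the variables whose degree is outside the support of the grading, and non-trivial otherwise; a grading is almost non-degenerate if it satisfies no non-trivial multilinear graded monomial identity. *)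

theory Defs
  imports "Jordan_Normal_Form.Matrix"
begin

text \<open>A G-grading is given by its family of homogeneous components g -> R_g.
  Elementary grading induced by (g_1,...,g_n) (indices 0..n-1):
  R_g = span of e_pq with g_q - g_p = g, i.e. matrices supported on those positions.\<close>

definition elem_grading :: "nat \<Rightarrow> (nat \<Rightarrow> 'g::ab_group_add) \<Rightarrow> 'g \<Rightarrow> 'a::zero mat set" where
  "elem_grading n gs g =
     {A \<in> carrier_mat n n. \<forall>p<n. \<forall>q<n. A $$ (p,q) \<noteq> 0 \<longrightarrow> gs q - gs p = g}"

definition grading_supp :: "nat \<Rightarrow> ('g \<Rightarrow> 'a::zero mat set) \<Rightarrow> 'g set" where
  "grading_supp n \<Gamma> = {g. \<exists>A\<in>\<Gamma> g. A \<noteq> 0\<^sub>m n n}"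

definition mat_alg_iso :: "nat \<Rightarrow> ('a::comm_ring_1 mat \<Rightarrow> 'a mat) \<Rightarrow> bool" where
  "mat_alg_iso n \<phi> \<longleftrightarrow> bij_betw \<phi> (carrier_mat n n) (carrier_mat n n) \<and>
     (\<forall>A\<in>carrier_mat n n. \<forall>B\<in>carrier_mat n n.
        \<phi> (A + B) = \<phi> A + \<phi> B \<and> \<phi> (A * B) = \<phi> A * \<phi> B) \<and>
     (\<forall>c. \<forall>A\<in>carrier_mat n n. \<phi> (c \<cdot>\<^sub>m A) = c \<cdot>\<^sub>m \<phi> A)"

definition graded_equivalent ::
  "nat \<Rightarrow> ('g \<Rightarrow> 'a::comm_ring_1 mat set) \<Rightarrow> ('h \<Rightarrow> 'a mat set) \<Rightarrow> bool" where
  "graded_equivalent n \<Gamma> \<Delta> \<longleftrightarrow> (\<exists>\<phi> \<alpha>. mat_alg_iso n \<phi> \<and>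
     bij_betw \<alpha> (grading_supp n \<Gamma>) (grading_supp n \<Delta>) \<and>
     (\<forall>g\<in>grading_supp n \<Gamma>. \<phi> ` \<Gamma> g = \<Delta> (\<alpha> g)))"

text \<open>Graded variables x_i^{(g)} are pairs (i,g) :: nat \<times> 'g (countably many of each degree).
  Noncommutative polynomials: functions from words to coefficients, finitely supported.\<close>

type_synonym ('g,'a) fpoly = "(nat \<times> 'g) list \<Rightarrow> 'a"

definition psupp :: "('g,'a::zero) fpoly \<Rightarrow> (nat \<times> 'g) list set" where
  "psupp p = {w. p w \<noteq> 0}"

definition fin_poly :: "('g,'a::zero) fpoly \<Rightarrow> bool" where
  "fin_poly p \<longleftrightarrow> finite (psupp p)"

definition pmono :: "(nat \<times> 'g) list \<Rightarrow> ('g,'a::{zero,one}) fpoly" where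
  "pmono w = (\<lambda>u. if u = w then 1 else 0)"

definition pone :: "('g,'a::{zero,one}) fpoly" where
  "pone = pmono []"

definition pmul :: "('g,'a::comm_ring_1) fpoly \<Rightarrow> ('g,'a) fpoly \<Rightarrow> ('g,'a) fpoly" where
  "pmul p q = (\<lambda>w. \<Sum>i\<le>length w. p (take i w) * q (drop i w))"

definition wdeg :: "(nat \<times> 'g::comm_monoid_add) list \<Rightarrow> 'g" where
  "wdeg w = sum_list (map snd w)"

text \<open>Image of p under the endomorphism sending each variable v to \<sigma> v.\<close>
definition psubst :: "((nat \<times> 'g) \<Rightarrow> ('g,'a::comm_ring_1) fpoly) \<Rightarrow> ('g,'a) fpoly \<Rightarrow> ('g,'a) fpoly" where
  "psubst \<sigma> p = (\<lambda>u. \<Sum>w\<in>psupp p. p w * foldr pmul (map \<sigma> w) pone u)"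

definition graded_subst :: "((nat \<times> 'g::comm_monoid_add) \<Rightarrow> ('g,'a::zero) fpoly) \<Rightarrow> bool" where
  "graded_subst \<sigma> \<longleftrightarrow> (\<forall>v. fin_poly (\<sigma> v) \<and> (\<forall>u. \<sigma> v u \<noteq> 0 \<longrightarrow> wdeg u = snd v))"

inductive_set TG_ideal :: "('g::comm_monoid_add,'a::comm_ring_1) fpoly set \<Rightarrow> ('g,'a) fpoly set"
  for S where
  gen: "s \<in> S \<Longrightarrow> fin_poly s \<Longrightarrow> graded_subst \<sigma> \<Longrightarrow> psubst \<sigma> s \<in> TG_ideal S"
| zero: "(\<lambda>_. 0) \<in> TG_ideal S"
| add: "p \<in> TG_ideal S \<Longrightarrow> q \<in> TG_ideal S \<Longrightarrow> (\<lambda>u. p u + q u) \<in> TG_ideal S"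
| lmul: "p \<in> TG_ideal S \<Longrightarrow> fin_poly r \<Longrightarrow> pmul r p \<in> TG_ideal S"
| rmul: "p \<in> TG_ideal S \<Longrightarrow> fin_poly r \<Longrightarrow> pmul p r \<in> TG_ideal S"

definition mono_identity :: "nat \<Rightarrow> ('g \<Rightarrow> 'a::comm_ring_1 mat set) \<Rightarrow> (nat \<times> 'g) list \<Rightarrow> bool" where
  "mono_identity n \<Gamma> w \<longleftrightarrow>
     (\<forall>a. (\<forall>v\<in>set w. a v \<in> \<Gamma> (snd v)) \<longrightarrow> foldr (*) (map a w) (1\<^sub>m n) = 0\<^sub>m n n)"

definition trivial_monomial :: "nat \<Rightarrow> ('g::comm_monoid_add \<Rightarrow> 'a::comm_ring_1 mat set) \<Rightarrow> (nat \<times> 'g) list \<Rightarrow> bool" where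
  "trivial_monomial n \<Gamma> w \<longleftrightarrow>
     (pmono w :: ('g,'a) fpoly) \<in> TG_ideal {pmono [v] | v. snd v \<notin> grading_supp n \<Gamma>}"

text \<open>Almost non-degenerate: every multilinear (distinct variables) graded monomial identity is trivial.\<close>
definition almost_nondegenerate :: "nat \<Rightarrow> ('g::comm_monoid_add \<Rightarrow> 'a::comm_ring_1 mat set) \<Rightarrow> bool" where
  "almost_nondegenerate n \<Gamma> \<longleftrightarrow>
     (\<forall>w. distinct w \<longrightarrow> mono_identity n \<Gamma> w \<longrightarrow> trivial_monomial n \<Gamma> w)"

end

theory Submission
  imports Defs
begin

text \<open>Commutativity of the neutral component forces g_1, ..., g_n to be pairwise distinct, since
  g_i = g_j would put the non-commuting matrix units e_ij and e_ji into degree 0. Conjugating by a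
  permutation matrix we may assume g_1 < ... < g_n. An elementary grading is determined up to
  equivalence by which differences g_q - g_p coincide, and for an arithmetic progression this is
  the pattern of the canonical Z-grading; this settles n <= 2. For n = 3 with gaps d = g_2 - g_1 and
  e = g_3 - g_2, if d ~= e there is no chain p -> k -> q with steps e and then d, so the multilinear
  monomial x^(e) y^(d) is a graded identity; it is non-trivial since d, e and d + e all lie in the
  support. Hence d = e.\<close>

definition single_entry_mat :: "nat \<Rightarrow> nat \<Rightarrow> nat \<Rightarrow> 'a::zero_neq_one mat" where
  "single_entry_mat n i j = mat n n (\<lambda>(p,q). if p = i \<and> q = j then 1 else 0)"

lemma single_entry_mat_carrier [simp]: "single_entry_mat n i j \<in> carrier_mat n n"
  by (simp add: single_entry_mat_def)

lemma index_single_entry_mat [simp]: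
  "p < n \<Longrightarrow> q < n \<Longrightarrow> single_entry_mat n i j $$ (p,q) = (if p = i \<and> q = j then 1 else 0)"
  by (simp add: single_entry_mat_def)

lemma single_entry_mat_in_elem_grading:
  "single_entry_mat n i j \<in> elem_grading n gs (gs j - gs i)"
  by (simp add: elem_grading_def split: if_splits)

lemma index_mult_mat_sum:
  "A \<in> carrier_mat n n \<Longrightarrow> B \<in> carrier_mat n n \<Longrightarrow> i < n \<Longrightarrow> j < n \<Longrightarrow>
   (A * B) $$ (i,j) = (\<Sum>k<n. A $$ (i,k) * B $$ (k,j))"
  by (auto simp: index_mult_mat scalar_prod_def row_def col_def lessThan_atLeast0)

lemma single_entry_mat_not_commute:
  assumes "i < n" "j < n" "i \<noteq> j"
  shows "single_entry_mat n i j * single_entry_mat n j i \<noteq>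
    (single_entry_mat n j i * single_entry_mat n i j :: 'a::comm_ring_1 mat)"
proof -
  have "(single_entry_mat n i j * single_entry_mat n j i :: 'a mat) $$ (i,i) =
      (\<Sum>k<n. single_entry_mat n i j $$ (i,k) * single_entry_mat n j i $$ (k,i))"
    using assms by (intro index_mult_mat_sum) simp_all
  also have "\<dots> = (\<Sum>k<n. if k = j then 1 else 0)"
    using assms by (intro sum.cong) auto
  finally have "(single_entry_mat n i j * single_entry_mat n j i :: 'a mat) $$ (i,i) = 1"
    using assms by simp
  moreover have "(single_entry_mat n j i * single_entry_mat n i j :: 'a mat) $$ (i,i) =
      (\<Sum>k<n. single_entry_mat n j i $$ (i,k) * single_entry_mat n i j $$ (k,i))"
    using assms by (intro index_mult_mat_sum) simp_all
  moreover have "\<dots> = 0"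
    using assms by (intro sum.neutral) auto
  ultimately show ?thesis by (metis zero_neq_one)
qed

lemma inj_on_if_neutral_component_commutative:
  assumes "\<forall>A\<in>(elem_grading n gs 0 :: 'a::comm_ring_1 mat set).
    \<forall>B\<in>elem_grading n gs 0. A * B = B * A"
  shows "inj_on gs {..<n}"
proof (rule inj_onI, rule ccontr)
  fix i j assume ij: "i \<in> {..<n}" "j \<in> {..<n}" "gs i = gs j" "i \<noteq> j"
  then have "(single_entry_mat n i j :: 'a mat) \<in> elem_grading n gs 0"
    "(single_entry_mat n j i :: 'a mat) \<in> elem_grading n gs 0"
    using single_entry_mat_in_elem_grading[of n i j gs] single_entry_mat_in_elem_grading[of n j i gs]
    by simp_all
  with assms single_entry_mat_not_commute[of i n j] ij show False by auto
qed

lemma grading_supp_elem_grading: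
  "grading_supp n (elem_grading n gs :: 'g::ab_group_add \<Rightarrow> 'a::zero_neq_one mat set) =
     {gs q - gs p | p q. p < n \<and> q < n}"
proof safe
  fix g assume "g \<in> grading_supp n (elem_grading n gs :: 'g \<Rightarrow> 'a mat set)"
  then obtain A :: "'a mat" where A: "A \<in> elem_grading n gs g" "A \<noteq> 0\<^sub>m n n"
    unfolding grading_supp_def by auto
  then have "A \<in> carrier_mat n n" by (simp add: elem_grading_def)
  with A(2) obtain p q where "p < n" "q < n" "A $$ (p,q) \<noteq> 0"
    by (metis carrier_matD eq_matI index_zero_mat(1-3))
  with A(1) show "\<exists>p q. g = gs q - gs p \<and> p < n \<and> q < n"
    unfolding elem_grading_def by force
next
  fix p q assume pq: "p < n" "q < n"
  then have "(single_entry_mat n p q :: 'a mat) \<noteq> 0\<^sub>m n n"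
    by (metis index_single_entry_mat index_zero_mat(1) zero_neq_one)
  with single_entry_mat_in_elem_grading
  show "gs q - gs p \<in> grading_supp n (elem_grading n gs :: 'g \<Rightarrow> 'a mat set)"
    unfolding grading_supp_def by blast
qed

definition has_infix_outside :: "'g set \<Rightarrow> (nat \<times> 'g::comm_monoid_add) list \<Rightarrow> bool" where
  "has_infix_outside S w \<longleftrightarrow> (\<exists>u v z. w = u @ v @ z \<and> wdeg v \<notin> S)"

lemma pmul_nonzero_split:
  "pmul p q u \<noteq> 0 \<Longrightarrow> \<exists>i\<le>length u. p (take i u) \<noteq> 0 \<and> q (drop i u) \<noteq> 0"
  unfolding pmul_def by (metis (mono_tags, lifting) atMost_iff mult_not_zero sum.neutral)

text \<open>A graded substitution of a variable only produces words of the variable's degree.\<close>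
lemma TG_ideal_support_has_infix_outside:
  assumes "p \<in> TG_ideal {pmono [v] | v. snd v \<notin> S}" "p u \<noteq> 0"
  shows "has_infix_outside S u"
  using assms
proof (induction arbitrary: u rule: TG_ideal.induct)
  case (gen s \<sigma>)
  then obtain v where v: "s = pmono [v]" "snd v \<notin> S" by auto
  from gen.prems obtain w where w: "w \<in> psupp s" "s w * foldr pmul (map \<sigma> w) pone u \<noteq> 0"
    unfolding psubst_def by (meson sum.not_neutral_contains_not_neutral)
  have "w = [v]" using w(1) v unfolding psupp_def pmono_def by (auto split: if_splits)
  with w have "pmul (\<sigma> v) pone u \<noteq> 0" by auto
  then obtain i where "\<sigma> v (take i u) \<noteq> 0" "pone (drop i u) \<noteq> (0::'b)"
    using pmul_nonzero_split by blast
  then have "\<sigma> v u \<noteq> 0" unfolding pone_def pmono_def by (auto split: if_splits)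
  then have "wdeg u = snd v" using gen.hyps(3) unfolding graded_subst_def by blast
  then show ?case unfolding has_infix_outside_def using v(2)
    by (metis append.left_neutral append.right_neutral)
next
  case zero then show ?case by simp
next
  case (add p q) then show ?case by (metis add.left_neutral add_0_right)
next
  case (lmul p r)
  then obtain i where "p (drop i u) \<noteq> 0" using pmul_nonzero_split by blast
  with lmul.IH obtain a b c where "drop i u = a @ b @ c" "wdeg b \<notin> S"
    unfolding has_infix_outside_def by blast
  then show ?case unfolding has_infix_outside_def
    by (metis append.assoc append_take_drop_id)
next
  case (rmul p r)
  then obtain i where "p (take i u) \<noteq> 0" using pmul_nonzero_split by blast
  with rmul.IH obtain a b c where "take i u = a @ b @ c" "wdeg b \<notin> S"
    unfolding has_infix_outside_def by blast
  then show ?case unfolding has_infix_outside_def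
    by (metis append.assoc append_take_drop_id)
qed

lemma infix_of_pair: "u @ v @ z = [x, y] \<Longrightarrow> v = [] \<or> v = [x] \<or> v = [y] \<or> v = [x, y]"
  by (cases u; cases v; auto simp: Cons_eq_append_conv append_eq_Cons_conv)

lemma pair_monomial_nontrivial:
  assumes "0 \<in> grading_supp n \<Gamma>" "g1 \<in> grading_supp n \<Gamma>" "g2 \<in> grading_supp n \<Gamma>"
    "g1 + g2 \<in> grading_supp n \<Gamma>"
  shows "\<not> trivial_monomial n (\<Gamma> :: 'g::comm_monoid_add \<Rightarrow> 'a::comm_ring_1 mat set) [(i, g1), (j, g2)]"
proof
  let ?w = "[(i, g1), (j, g2)]"
  assume "trivial_monomial n \<Gamma> ?w"
  then have "has_infix_outside (grading_supp n \<Gamma>) ?w"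
    unfolding trivial_monomial_def
    by (rule TG_ideal_support_has_infix_outside) (simp add: pmono_def)
  then obtain u v z where "u @ v @ z = ?w" "wdeg v \<notin> grading_supp n \<Gamma>"
    unfolding has_infix_outside_def by metis
  from infix_of_pair[OF this(1)] this(2) assms show False
    by (elim disjE) (simp_all add: wdeg_def)
qed

lemma elem_grading_mult_eq_zero:
  fixes gs :: "nat \<Rightarrow> 'g::ab_group_add"
  assumes A: "A \<in> elem_grading n gs g1" and B: "B \<in> elem_grading n gs g2"
    and no_path: "\<And>p k q. p < n \<Longrightarrow> k < n \<Longrightarrow> q < n \<Longrightarrow> gs k - gs p = g1 \<Longrightarrow> gs q - gs k \<noteq> g2"
  shows "A * B = (0\<^sub>m n n :: 'a::comm_ring_1 mat)"
proof -
  have C: "A \<in> carrier_mat n n" "B \<in> carrier_mat n n"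
    using A B by (simp_all add: elem_grading_def)
  show ?thesis
  proof (rule eq_matI)
    fix i j assume "i < dim_row (0\<^sub>m n n :: 'a mat)" "j < dim_col (0\<^sub>m n n :: 'a mat)"
    then have ij: "i < n" "j < n" by simp_all
    have "(A * B) $$ (i,j) = (\<Sum>k<n. A $$ (i,k) * B $$ (k,j))"
      using C ij by (rule index_mult_mat_sum)
    also have "\<dots> = 0"
    proof (rule sum.neutral, rule ballI, rule ccontr)
      fix k assume k: "k \<in> {..<n}" and "A $$ (i,k) * B $$ (k,j) \<noteq> 0"
      then have "A $$ (i,k) \<noteq> 0" "B $$ (k,j) \<noteq> 0" by auto
      with A B ij k have "gs k - gs i = g1" "gs j - gs k = g2"
        unfolding elem_grading_def by auto
      with no_path ij k show False by blast
    qed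
    finally show "(A * B) $$ (i,j) = 0\<^sub>m n n $$ (i,j)" using ij by simp
  qed (use C in simp_all)
qed

lemma almost_nondegenerate_elem_grading_path:
  fixes gs :: "nat \<Rightarrow> 'g::ab_group_add"
  assumes nd: "almost_nondegenerate n (elem_grading n gs :: 'g \<Rightarrow> 'a::comm_ring_1 mat set)"
    and supp: "g1 \<in> grading_supp n (elem_grading n gs :: 'g \<Rightarrow> 'a mat set)"
      "g2 \<in> grading_supp n (elem_grading n gs :: 'g \<Rightarrow> 'a mat set)"
      "g1 + g2 \<in> grading_supp n (elem_grading n gs :: 'g \<Rightarrow> 'a mat set)"
  obtains p k q where "p < n" "k < n" "q < n" "gs k - gs p = g1" "gs q - gs k = g2"
proof (rule ccontr)
  let ?\<Gamma> = "elem_grading n gs :: 'g \<Rightarrow> 'a mat set"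
  let ?w = "[(0::nat, g1), (1, g2)]"
  assume "\<not> thesis"
  with that have no_path: "\<And>p k q. p < n \<Longrightarrow> k < n \<Longrightarrow> q < n \<Longrightarrow> gs k - gs p = g1 \<Longrightarrow> gs q - gs k \<noteq> g2"
    by blast
  have "mono_identity n ?\<Gamma> ?w"
    unfolding mono_identity_def
  proof (intro allI impI)
    fix a :: "nat \<times> 'g \<Rightarrow> 'a mat"
    assume "\<forall>v\<in>set ?w. a v \<in> ?\<Gamma> (snd v)"
    then have "a (0, g1) * a (1, g2) = 0\<^sub>m n n"
      using no_path by (intro elem_grading_mult_eq_zero) auto
    moreover have "a (1, g2) \<in> carrier_mat n n"
      using \<open>\<forall>v\<in>set ?w. a v \<in> ?\<Gamma> (snd v)\<close> by (simp add: elem_grading_def)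
    ultimately show "foldr (*) (map a ?w) (1\<^sub>m n) = 0\<^sub>m n n" by simp
  qed
  with nd have "trivial_monomial n ?\<Gamma> ?w"
    unfolding almost_nondegenerate_def by simp
  moreover have "0 \<in> grading_supp n ?\<Gamma>"
    using supp(1) by (auto simp: grading_supp_elem_grading)
  ultimately show False
    using pair_monomial_nontrivial[OF _ supp] by blast
qed

definition reindex_mat :: "nat \<Rightarrow> (nat \<Rightarrow> nat) \<Rightarrow> 'a mat \<Rightarrow> 'a mat" where
  "reindex_mat n \<pi> A = mat n n (\<lambda>(i,j). A $$ (\<pi> i, \<pi> j))"

lemma dim_reindex_mat [simp]:
  "dim_row (reindex_mat n \<pi> A) = n" "dim_col (reindex_mat n \<pi> A) = n"
  by (simp_all add: reindex_mat_def)

lemma reindex_mat_carrier [simp]: "reindex_mat n \<pi> A \<in> carrier_mat n n"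
  by (simp add: carrier_matI)

lemma index_reindex_mat [simp]:
  "i < n \<Longrightarrow> j < n \<Longrightarrow> reindex_mat n \<pi> A $$ (i,j) = A $$ (\<pi> i, \<pi> j)"
  by (simp add: reindex_mat_def)

lemma reindex_mat_inv:
  assumes "bij_betw \<pi> {..<n} {..<n}" "A \<in> carrier_mat n n"
  shows "reindex_mat n \<pi> (reindex_mat n (inv_into {..<n} \<pi>) A) = A"
    and "reindex_mat n (inv_into {..<n} \<pi>) (reindex_mat n \<pi> A) = A"
proof -
  have "inv_into {..<n} \<pi> i < n" "\<pi> i < n" if "i < n" for i
    using assms(1) that bij_betw_inv_into bij_betwE by fastforce+
  then show "reindex_mat n \<pi> (reindex_mat n (inv_into {..<n} \<pi>) A) = A"
    "reindex_mat n (inv_into {..<n} \<pi>) (reindex_mat n \<pi> A) = A"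
    using assms by (auto intro!: eq_matI simp: bij_betw_inv_into_right bij_betw_inv_into_left)
qed

lemma reindex_mat_mult:
  assumes bij: "bij_betw \<pi> {..<n} {..<n}"
    and C: "A \<in> carrier_mat n n" "B \<in> carrier_mat n n"
  shows "reindex_mat n \<pi> (A * B) = reindex_mat n \<pi> A * reindex_mat n \<pi> (B :: 'a::comm_ring_1 mat)"
proof (rule eq_matI)
  fix i j assume "i < dim_row (reindex_mat n \<pi> A * reindex_mat n \<pi> B)"
    "j < dim_col (reindex_mat n \<pi> A * reindex_mat n \<pi> B)"
  then have ij: "i < n" "j < n" by simp_all
  have \<pi>: "\<pi> i < n" "\<pi> j < n" "\<pi> ` {..<n} = {..<n}" "inj_on \<pi> {..<n}"
    using bij ij by (auto simp: bij_betw_def)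
  have "(reindex_mat n \<pi> A * reindex_mat n \<pi> B) $$ (i,j) = (\<Sum>k<n. A $$ (\<pi> i, \<pi> k) * B $$ (\<pi> k, \<pi> j))"
    using ij \<pi> bij by (subst index_mult_mat_sum) (auto intro!: sum.cong dest: bij_betwE)
  also have "\<dots> = (\<Sum>k\<in>\<pi> ` {..<n}. A $$ (\<pi> i, k) * B $$ (k, \<pi> j))"
    using \<pi>(4) by (simp add: sum.reindex)
  also have "\<dots> = (A * B) $$ (\<pi> i, \<pi> j)"
    using C \<pi> by (simp only: index_mult_mat_sum)
  finally show "reindex_mat n \<pi> (A * B) $$ (i,j) = (reindex_mat n \<pi> A * reindex_mat n \<pi> B) $$ (i,j)"
    using ij by simp
qed simp_all

lemma mat_alg_iso_reindex_mat:
  assumes bij: "bij_betw \<pi> {..<n} {..<n}"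
  shows "mat_alg_iso n (reindex_mat n \<pi> :: 'a::comm_ring_1 mat \<Rightarrow> 'a mat)"
proof -
  have \<pi>: "\<pi> i < n" if "i < n" for i
    using bij that bij_betwE by blast
  have "bij_betw (reindex_mat n \<pi> :: 'a mat \<Rightarrow> 'a mat) (carrier_mat n n) (carrier_mat n n)"
    by (rule bij_betw_byWitness[where f' = "reindex_mat n (inv_into {..<n} \<pi>)"])
      (auto simp: reindex_mat_inv[OF bij])
  moreover have "reindex_mat n \<pi> (A + B) = reindex_mat n \<pi> A + reindex_mat n \<pi> B"
    "reindex_mat n \<pi> (c \<cdot>\<^sub>m A) = c \<cdot>\<^sub>m reindex_mat n \<pi> A"
    if "A \<in> carrier_mat n n" "B \<in> carrier_mat n n" for A B :: "'a mat" and c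
    using that \<pi> by (auto intro!: eq_matI)
  ultimately show ?thesis
    unfolding mat_alg_iso_def using reindex_mat_mult[OF bij] by blast
qed

lemma reindex_mat_image_elem_grading:
  assumes bij: "bij_betw \<pi> {..<n} {..<n}"
  shows "reindex_mat n \<pi> ` (elem_grading n gs g :: 'a::zero mat set) = elem_grading n (gs \<circ> \<pi>) g"
proof -
  let ?\<sigma> = "inv_into {..<n} \<pi>"
  have \<pi>: "\<pi> i < n" "?\<sigma> i < n" "\<pi> (?\<sigma> i) = i" if "i < n" for i
    using bij that bij_betwE bij_betw_inv_into bij_betw_inv_into_right by fastforce+
  have "reindex_mat n \<pi> A \<in> elem_grading n (gs \<circ> \<pi>) g" if "A \<in> elem_grading n gs g" for A :: "'a mat"
    using that \<pi> by (auto simp: elem_grading_def)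
  moreover have "reindex_mat n ?\<sigma> B \<in> elem_grading n gs g" if "B \<in> elem_grading n (gs \<circ> \<pi>) g" for B :: "'a mat"
    using that \<pi> unfolding elem_grading_def by (auto dest!: spec[of _ "?\<sigma> _"])
  moreover have "B = reindex_mat n \<pi> (reindex_mat n ?\<sigma> B)" if "B \<in> elem_grading n (gs \<circ> \<pi>) g" for B :: "'a mat"
    using that reindex_mat_inv(1)[OF bij] unfolding elem_grading_def by (metis (lifting) mem_Collect_eq)
  ultimately show ?thesis by blast
qed

lemma ex_difference_map:
  fixes f :: "nat \<Rightarrow> 'g::ab_group_add" and h :: "nat \<Rightarrow> 'h::ab_group_add"
  assumes same_pattern: "\<And>p q p' q'. p < n \<Longrightarrow> q < n \<Longrightarrow> p' < n \<Longrightarrow> q' < n \<Longrightarrow>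
      f q - f p = f q' - f p' \<longleftrightarrow> h q - h p = h q' - h p'"
  shows "\<exists>\<alpha>. bij_betw \<alpha> {f q - f p | p q. p < n \<and> q < n} {h q - h p | p q. p < n \<and> q < n} \<and>
    (\<forall>p<n. \<forall>q<n. \<alpha> (f q - f p) = h q - h p)"
proof -
  define \<alpha> where "\<alpha> g = (SOME k. \<exists>p<n. \<exists>q<n. f q - f p = g \<and> k = h q - h p)" for g
  have \<alpha>: "\<alpha> (f q - f p) = h q - h p" if "p < n" "q < n" for p q
  proof -
    have "\<exists>k. \<exists>p'<n. \<exists>q'<n. f q' - f p' = f q - f p \<and> k = h q' - h p'"
      using that by blast
    from someI_ex[OF this] obtain p' q' where "p' < n" "q' < n"
      "f q' - f p' = f q - f p" "\<alpha> (f q - f p) = h q' - h p'"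
      unfolding \<alpha>_def by blast
    then show ?thesis using same_pattern[of p' q' p q] that by simp
  qed
  have "inj_on \<alpha> {f q - f p | p q. p < n \<and> q < n}"
  proof (rule inj_onI, clarify)
    fix p q p' q' assume "p < n" "q < n" "p' < n" "q' < n" "\<alpha> (f q - f p) = \<alpha> (f q' - f p')"
    then show "f q - f p = f q' - f p'" using same_pattern by (simp add: \<alpha>)
  qed
  moreover have "\<alpha> ` {f q - f p | p q. p < n \<and> q < n} = {h q - h p | p q. p < n \<and> q < n}"
  proof safe
    fix p q :: nat assume "p < n" "q < n"
    then show "\<exists>p' q'. \<alpha> (f q - f p) = h q' - h p' \<and> p' < n \<and> q' < n"
      by (auto simp: \<alpha>)
  next
    fix p q :: nat assume "p < n" "q < n"
    then show "h q - h p \<in> \<alpha> ` {f q - f p | p q. p < n \<and> q < n}"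
      by (intro image_eqI[of _ _ "f q - f p"]) (auto simp: \<alpha>)
  qed
  ultimately have "bij_betw \<alpha> {f q - f p | p q. p < n \<and> q < n} {h q - h p | p q. p < n \<and> q < n}"
    by (simp add: bij_betw_def)
  then show ?thesis using \<alpha> by blast
qed

lemma differences_reindex:
  fixes f :: "nat \<Rightarrow> 'g::ab_group_add" and \<pi> :: "nat \<Rightarrow> nat"
  assumes "bij_betw \<pi> {..<n} {..<n}"
  shows "{f q - f p | p q. p < n \<and> q < n} = {(f \<circ> \<pi>) q - (f \<circ> \<pi>) p | p q. p < n \<and> q < n}"
proof -
  have \<pi>: "\<pi> ` {..<n} = {..<n}" using assms by (simp add: bij_betw_def)
  show ?thesis
  proof safe
    fix p q :: nat assume "p < n" "q < n"
    with \<pi> obtain p' q' where "p' < n" "q' < n" "p = \<pi> p'" "q = \<pi> q'"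
      by (metis imageE lessThan_iff)
    then show "\<exists>p' q'. f q - f p = (f \<circ> \<pi>) q' - (f \<circ> \<pi>) p' \<and> p' < n \<and> q' < n" by auto
  next
    fix p q :: nat assume "p < n" "q < n"
    with \<pi> have "\<pi> p < n" "\<pi> q < n" by auto
    then show "\<exists>p' q'. (f \<circ> \<pi>) q - (f \<circ> \<pi>) p = f q' - f p' \<and> p' < n \<and> q' < n" by auto
  qed
qed

lemma graded_equivalent_elem_gradingI:
  fixes gs :: "nat \<Rightarrow> 'g::ab_group_add" and h :: "nat \<Rightarrow> 'h::ab_group_add"
  assumes bij: "bij_betw \<pi> {..<n} {..<n}"
    and same_pattern: "\<And>p q p' q'. p < n \<Longrightarrow> q < n \<Longrightarrow> p' < n \<Longrightarrow> q' < n \<Longrightarrow>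
      (gs \<circ> \<pi>) q - (gs \<circ> \<pi>) p = (gs \<circ> \<pi>) q' - (gs \<circ> \<pi>) p' \<longleftrightarrow> h q - h p = h q' - h p'"
  shows "graded_equivalent n (elem_grading n gs :: 'g \<Rightarrow> 'a::comm_ring_1 mat set) (elem_grading n h)"
proof -
  let ?f = "gs \<circ> \<pi>"
  have supp: "grading_supp n (elem_grading n gs :: 'g \<Rightarrow> 'a mat set) = {?f q - ?f p | p q. p < n \<and> q < n}"
    "grading_supp n (elem_grading n h :: 'h \<Rightarrow> 'a mat set) = {h q - h p | p q. p < n \<and> q < n}"
    unfolding grading_supp_elem_grading by (rule differences_reindex[OF bij], rule refl)
  obtain \<alpha> where \<alpha>: "bij_betw \<alpha> {?f q - ?f p | p q. p < n \<and> q < n} {h q - h p | p q. p < n \<and> q < n}"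
    "\<And>p q. p < n \<Longrightarrow> q < n \<Longrightarrow> \<alpha> (?f q - ?f p) = h q - h p"
    using ex_difference_map[of n ?f h, OF same_pattern] by blast
  have "reindex_mat n \<pi> ` elem_grading n gs g = (elem_grading n h (\<alpha> g) :: 'a mat set)"
    if "g \<in> {?f q - ?f p | p q. p < n \<and> q < n}" for g
  proof -
    from that obtain p q where pq: "p < n" "q < n" "g = ?f q - ?f p" by blast
    have "elem_grading n ?f g = (elem_grading n h (\<alpha> g) :: 'a mat set)"
      unfolding elem_grading_def pq(3) \<alpha>(2)[OF pq(1,2)] using same_pattern pq by auto
    then show ?thesis by (simp add: reindex_mat_image_elem_grading[OF bij])
  qed
  then show ?thesis
    unfolding graded_equivalent_def supp using mat_alg_iso_reindex_mat[OF bij] \<alpha>(1) by blast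
qed

lemma ex_sorting_permutation:
  fixes f :: "nat \<Rightarrow> 'a::linorder"
  assumes "inj_on f {..<n}"
  obtains \<pi> where "bij_betw \<pi> {..<n} {..<n}" "strict_mono_on {..<n} (f \<circ> \<pi>)"
proof
  let ?xs = "sorted_list_of_set (f ` {..<n})"
  have len: "length ?xs = n"
    using assms by (simp add: card_image)
  have "bij_betw (nth ?xs) {..<n} (f ` {..<n})"
    using len by (intro bij_betw_nth) simp_all
  moreover have "bij_betw (inv_into {..<n} f) (f ` {..<n}) {..<n}"
    using assms by (simp add: bij_betw_inv_into inj_on_imp_bij_betw)
  ultimately show "bij_betw (inv_into {..<n} f \<circ> nth ?xs) {..<n} {..<n}"
    by (rule bij_betw_trans)
  have "(f \<circ> (inv_into {..<n} f \<circ> nth ?xs)) i = ?xs ! i" if "i < n" for i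
  proof -
    have "?xs ! i \<in> f ` {..<n}"
      using that len nth_mem[of i ?xs] by simp
    then show ?thesis by (simp add: f_inv_into_f)
  qed
  then show "strict_mono_on {..<n} (f \<circ> (inv_into {..<n} f \<circ> nth ?xs))"
    using len
    by (auto intro!: strict_mono_onI
        sorted_wrt_nth_less[OF sorted_list_of_set.strict_sorted_key_list_of_set])
qed

text \<open>The value at \<open>i\<close> of an equally spaced sequence is \<open>f 0\<close> plus \<open>i\<close> copies of the gap, and
  \<open>i \<mapsto> i\<close> copies of a positive gap is injective and additive.\<close>
lemma equally_spaced_diff_eq_iff:
  fixes f :: "nat \<Rightarrow> 'g::linordered_ab_group_add"
  assumes mono: "strict_mono_on {..<n} f"
    and gaps: "\<And>i. Suc (Suc i) < n \<Longrightarrow> f (Suc (Suc i)) - f (Suc i) = f (Suc i) - f i"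
    and "p < n" "q < n" "p' < n" "q' < n"
  shows "f q - f p = f q' - f p' \<longleftrightarrow> int q - int p = int q' - int p'"
proof (cases "n \<le> 1")
  case True
  with assms have "p = 0" "q = 0" "p' = 0" "q' = 0" by linarith+
  then show ?thesis by simp
next
  case False
  define d where "d = f 1 - f 0"
  define S where "S k = (\<Sum>i<k. d)" for k :: nat
  have gap: "f (Suc i) - f i = d" if "Suc i < n" for i
    using that by (induction i) (simp_all add: d_def gaps)
  have f: "f i = f 0 + S i" if "i < n" for i
    using that by (induction i) (auto simp: S_def dest: gap[unfolded diff_eq_eq])
  have S_add: "S (a + b) = S a + S b" for a b
    by (induction b) (simp_all add: S_def add.assoc)
  have "0 < d"
    using mono False by (simp add: d_def strict_mono_onD)
  then have "strict_mono S"
    by (simp add: strict_mono_Suc_iff S_def)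
  have diff: "f j - f i = S j - S i" if "i < n" "j < n" for i j
    using f[OF that(1)] f[OF that(2)] by simp
  have "f q - f p = f q' - f p' \<longleftrightarrow> S q - S p = S q' - S p'"
    using assms(3-6) by (simp add: diff)
  also have "\<dots> \<longleftrightarrow> S q + S p' = S q' + S p"
    by (simp add: algebra_simps)
  also have "\<dots> \<longleftrightarrow> q + p' = q' + p"
    using \<open>strict_mono S\<close> by (simp flip: S_add add: strict_mono_eq)
  also have "\<dots> \<longleftrightarrow> int q - int p = int q' - int p'"
    by linarith
  finally show ?thesis .
qed

lemma strict_mono3_gaps_eq_if_path:
  fixes f :: "nat \<Rightarrow> 'g::linordered_ab_group_add"
  assumes mono: "strict_mono_on {..<3} f" and "p < 3" "k < 3" "q < 3"
    and steps: "f k - f p = f 2 - f 1" "f q - f k = f 1 - f 0"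
  shows "f 2 - f 1 = f 1 - f 0"
proof -
  have "0 < f 2 - f 1" "0 < f 1 - f 0"
    using mono by (simp_all add: strict_mono_onD)
  then have "0 < f k - f p" "0 < f q - f k"
    by (simp_all only: steps)
  then have "f p < f k" "f k < f q"
    by simp_all
  then have "p < k" "k < q"
    using mono assms(2-4) by (simp_all add: strict_mono_on_less)
  then have "p = 0" "k = 1" "q = 2"
    using assms(4) by linarith+
  then show ?thesis
    using steps(1) by simp
qed

lemma equal_gaps_if_almost_nondegenerate:
  fixes gs :: "nat \<Rightarrow> 'g::linordered_ab_group_add" and \<pi> :: "nat \<Rightarrow> nat"
  assumes nd: "almost_nondegenerate 3 (elem_grading 3 gs :: 'g \<Rightarrow> 'a::comm_ring_1 mat set)"
    and \<pi>: "bij_betw \<pi> {..<3} {..<3}" and mono: "strict_mono_on {..<3} (gs \<circ> \<pi>)"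
  shows "(gs \<circ> \<pi>) 2 - (gs \<circ> \<pi>) 1 = (gs \<circ> \<pi>) 1 - (gs \<circ> \<pi>) 0"
proof -
  let ?f = "gs \<circ> \<pi>"
  have supp: "?f q - ?f p \<in> grading_supp 3 (elem_grading 3 gs :: 'g \<Rightarrow> 'a mat set)"
    if "p < 3" "q < 3" for p q
    using that \<pi> by (auto simp: grading_supp_elem_grading dest: bij_betwE)
  have "(?f 2 - ?f 1) + (?f 1 - ?f 0) = ?f 2 - ?f 0" by simp
  then have "?f 2 - ?f 1 \<in> grading_supp 3 (elem_grading 3 gs :: 'g \<Rightarrow> 'a mat set)"
    "?f 1 - ?f 0 \<in> grading_supp 3 (elem_grading 3 gs :: 'g \<Rightarrow> 'a mat set)"
    "(?f 2 - ?f 1) + (?f 1 - ?f 0) \<in> grading_supp 3 (elem_grading 3 gs :: 'g \<Rightarrow> 'a mat set)"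
    using supp by simp_all
  then obtain p k q where path: "p < 3" "k < 3" "q < 3"
    "gs k - gs p = ?f 2 - ?f 1" "gs q - gs k = ?f 1 - ?f 0"
    by (rule almost_nondegenerate_elem_grading_path[OF nd])
  have "\<exists>y<3. \<pi> y = x" if "x < 3" for x
    using \<pi> that by (metis bij_betw_imp_surj_on imageE lessThan_iff)
  with path obtain p' k' q' where "p' < 3" "k' < 3" "q' < 3" "\<pi> p' = p" "\<pi> k' = k" "\<pi> q' = q"
    by metis
  with path show ?thesis
    using mono by (intro strict_mono3_gaps_eq_if_path[of ?f p' k' q']) simp_all
qed

theorem mainTheorem9:
  fixes gs :: "nat \<Rightarrow> 'g::linordered_ab_group_add" and n :: nat
  assumes "n \<le> 3"
    and "almost_nondegenerate n (elem_grading n gs :: 'g \<Rightarrow> 'a::field_char_0 mat set)"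
    and "\<forall>A\<in>(elem_grading n gs 0 :: 'a mat set). \<forall>B\<in>elem_grading n gs 0. A * B = B * A"
  shows "graded_equivalent n (elem_grading n gs :: 'g \<Rightarrow> 'a mat set) (elem_grading n (\<lambda>i. int i))"
proof -
  obtain \<pi> where \<pi>: "bij_betw \<pi> {..<n} {..<n}" and mono: "strict_mono_on {..<n} (gs \<circ> \<pi>)"
    using ex_sorting_permutation inj_on_if_neutral_component_commutative[OF assms(3)] by blast
  have "(gs \<circ> \<pi>) (Suc (Suc i)) - (gs \<circ> \<pi>) (Suc i) = (gs \<circ> \<pi>) (Suc i) - (gs \<circ> \<pi>) i"
    if "Suc (Suc i) < n" for i
  proof -
    have "n = 3" "i = 0" using that assms(1) by linarith+
    then show ?thesis
      using equal_gaps_if_almost_nondegenerate[of gs \<pi>] assms(2) \<pi> mono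
      by (simp add: numeral_2_eq_2)
  qed
  then show ?thesis
    using equally_spaced_diff_eq_iff[OF mono] by (intro graded_equivalent_elem_gradingI[OF \<pi>]) simp
qed

end
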